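(* Let $K$ be a compact Hausdorff space and let $(f_n)_{n\in\omega}$ be a sequence of continuous functions $f_n\colon\operatorname{dom}(f_n)\to K$, where for each $n$ the set $\operatorname{dom}(f_n)$ is a closed subset of $K$, such that $K\times K=\bigcup_{n\in\omega}(f_n\cup f_n^{-1})$. Then $|K|\le\aleph_0$.
   Context: Functions are identified with their graphs: $f_n=\{(x,f_n(x)):x\in\operatorname{dom}(f_n)\}\subseteq K\times K$, and $f_n^{-1}=\{(f_n(x),x):x\in\operatorname{dom}(f_n)\}$. *)

theory Defs
  imports "HOL-Analysis.Analysis"
begin

definition graph_on :: "'a set \<Rightarrow> ('a \<Rightarrow> 'b) \<Rightarrow> ('a \<times> 'b) set" where
  "graph_on D f = {(x, f x) | x. x \<in> D}"

end

theory Submission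
  imports Defs
begin

text \<open>
  If \<open>K\<close> is uncountable, its condensation points form a nonempty closed set \<open>L\<close>. The square
  \<open>L \<times> L\<close> is covered by countably many closed sets, the graphs of the \<open>f\<^sub>n\<close> and their
  converses, so by Baire's theorem one of them contains a nonempty open rectangle of \<open>L \<times> L\<close>;
  since it is the graph of a function or of its inverse, one side of the rectangle is a single
  point, i.e. \<open>L\<close> has an isolated point \<open>p\<close>. A closed neighbourhood \<open>C\<close> of \<open>p\<close> meeting \<open>L\<close>
  only in \<open>p\<close> is uncountable, and every uncountable closed subset of \<open>C\<close> contains \<open>p\<close>. For
  \<open>x \<in> K\<close>, \<open>C\<close> is covered by the countably many points \<open>f\<^sub>n x\<close> and the closed fibres
  \<open>f\<^sub>n\<^sup>-\<^sup>1{x} \<inter> C\<close>, so some fibre is uncountable and contains \<open>p\<close>, i.e. \<open>x = f\<^sub>n p\<close>.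
\<close>

definition condensation_point_of :: "'a topology \<Rightarrow> 'a set \<Rightarrow> 'a \<Rightarrow> bool" where
  "condensation_point_of X S p \<longleftrightarrow>
     p \<in> topspace X \<and> (\<forall>U. openin X U \<and> p \<in> U \<longrightarrow> uncountable (U \<inter> S))"

lemma condensation_point_of_mono:
  "condensation_point_of X S p \<Longrightarrow> S \<subseteq> T \<Longrightarrow> condensation_point_of X T p"
  unfolding condensation_point_of_def by (meson countable_subset Int_mono order_refl)

lemma condensation_point_of_closedin_mem:
  assumes "closedin X S" "condensation_point_of X S p"
  shows "p \<in> S"
proof (rule ccontr)
  assume "p \<notin> S"
  then have "uncountable ((topspace X - S) \<inter> S)"
    using assms unfolding condensation_point_of_def closedin_def by blast
  then show False
    by (metis Diff_disjoint Int_commute countable_empty)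
qed

lemma closedin_condensation_points: "closedin X {p. condensation_point_of X S p}"
proof -
  have "openin X (topspace X - {p. condensation_point_of X S p})"
  proof (subst openin_subopen, intro ballI)
    fix x assume "x \<in> topspace X - {p. condensation_point_of X S p}"
    then obtain U where U: "openin X U" "x \<in> U" "countable (U \<inter> S)"
      unfolding condensation_point_of_def by blast
    then have "U \<subseteq> topspace X - {p. condensation_point_of X S p}"
      using openin_subset unfolding condensation_point_of_def by blast
    with U show "\<exists>T. openin X T \<and> x \<in> T \<and> T \<subseteq> topspace X - {p. condensation_point_of X S p}"
      by blast
  qed
  then show ?thesis
    by (auto simp: closedin_def condensation_point_of_def)
qed

lemma compact_space_condensation_point_exists:
  assumes "compact_space X" "S \<subseteq> topspace X" "uncountable S"
  obtains p where "condensation_point_of X S p"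
proof -
  have "\<exists>p. condensation_point_of X S p"
  proof (rule ccontr)
    assume "\<nexists>p. condensation_point_of X S p"
    then have "topspace X \<subseteq> \<Union>{U. openin X U \<and> countable (U \<inter> S)}"
      unfolding condensation_point_of_def by blast
    then obtain \<F> where \<F>: "finite \<F>" "\<F> \<subseteq> {U. openin X U \<and> countable (U \<inter> S)}"
      "topspace X \<subseteq> \<Union>\<F>"
      using assms(1) unfolding compact_space_alt by (metis (no_types, lifting) mem_Collect_eq)
    then have "countable (\<Union>U\<in>\<F>. U \<inter> S)"
      by (intro countable_UN) (auto intro: countable_finite)
    moreover have "S = (\<Union>U\<in>\<F>. U \<inter> S)"
      using \<F>(3) assms(2) by blast
    ultimately show False
      using assms(3) by simp
  qed
  with that show thesis by blast
qed

lemma single_valued_graph_on: "single_valued (graph_on D f)"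
  by (auto simp: single_valued_def graph_on_def)

lemma closedin_graph_on:
  assumes Y: "Hausdorff_space Y" and D: "closedin X D"
    and f: "continuous_map (subtopology X D) Y f"
  shows "closedin (prod_topology X Y) (graph_on D f)"
proof -
  let ?Z = "prod_topology (subtopology X D) Y"
  let ?\<Delta> = "(\<lambda>y. (y, y)) ` topspace Y"
  have "continuous_map ?Z (prod_topology Y Y) (\<lambda>z. (f (fst z), snd z))"
    using continuous_map_compose[OF continuous_map_fst f] continuous_map_snd
    by (auto intro!: continuous_map_pairedI simp: o_def)
  then have "closedin ?Z {z \<in> topspace ?Z. (f (fst z), snd z) \<in> ?\<Delta>}"
    using closedin_continuous_map_preimage Y Hausdorff_space_closedin_diagonal by blast
  moreover have "{z \<in> topspace ?Z. (f (fst z), snd z) \<in> ?\<Delta>} = graph_on D f"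
    using closedin_subset[OF D] continuous_map_image_subset_topspace[OF f]
    by (auto simp: graph_on_def image_subset_iff)
  moreover have "closedin (prod_topology X Y) (D \<times> topspace Y)"
    using D by (simp add: closedin_prod_Times_iff)
  ultimately show ?thesis
    using closedin_trans_full by (metis subtopology_Times subtopology_topspace)
qed

lemma closedin_converse_graph_on:
  assumes "Hausdorff_space Y" "closedin X D" "continuous_map (subtopology X D) Y f"
  shows "closedin (prod_topology Y X) (converse (graph_on D f))"
proof -
  have "closedin (prod_topology X Y) (graph_on D f)"
    using assms by (rule closedin_graph_on)
  moreover have "converse (graph_on D f) = (\<lambda>(x, y). (y, x)) ` graph_on D f"
    by auto
  ultimately show ?thesis
    using homeomorphic_map_closedness[OF homeomorphic_map_swap] closedin_subset by metis
qed

lemma Baire_rectangle_in_closed_cover: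
  assumes "compact_space X" "Hausdorff_space X" "compact_space Y" "Hausdorff_space Y"
    and "topspace X \<noteq> {}" "topspace Y \<noteq> {}" "countable \<R>"
    and closed: "\<And>R. R \<in> \<R> \<Longrightarrow> closedin (prod_topology X Y) R"
    and cover: "topspace X \<times> topspace Y \<subseteq> \<Union>\<R>"
  obtains R U V where "R \<in> \<R>" "openin X U" "openin Y V" "U \<noteq> {}" "V \<noteq> {}" "U \<times> V \<subseteq> R"
proof -
  let ?Z = "prod_topology X Y"
  have "compact_space ?Z" "Hausdorff_space ?Z"
    using assms by (simp_all add: compact_space_prod_topology Hausdorff_space_prod_topology)
  then have Baire: "locally_compact_space ?Z \<and> regular_space ?Z"
    by (simp add: compact_imp_locally_compact_space compact_Hausdorff_imp_regular_space)
  have "\<Union>\<R> = topspace ?Z"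
    using cover closed closedin_subset by fastforce
  then have "?Z interior_of \<Union>\<R> = topspace ?Z"
    by (simp only: interior_of_topspace)
  then have "?Z interior_of \<Union>\<R> \<noteq> {}"
    using assms(5,6) by simp
  then obtain R where R: "R \<in> \<R>" "?Z interior_of R \<noteq> {}"
    using Baire_category_alt[OF disjI2[OF Baire] \<open>countable \<R>\<close>] closed by blast
  then obtain x y where xy: "(x, y) \<in> ?Z interior_of R"
    by auto
  then obtain U V where UV: "openin X U" "openin Y V" "x \<in> U" "y \<in> V"
    "U \<times> V \<subseteq> ?Z interior_of R"
    using openin_prod_topology_alt[THEN iffD1, OF openin_interior_of, rule_format, OF xy] by blast
  show thesis
  proof (rule that[OF R(1) UV(1,2)])
    show "U \<times> V \<subseteq> R"
      using UV(5) interior_of_subset by (rule order_trans)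
  qed (use UV(3,4) in auto)
qed

lemma isolated_point_of_closed_partial_function_cover:
  assumes "compact_space X" "Hausdorff_space X" "topspace X \<noteq> {}" "countable \<R>"
    and "\<And>R. R \<in> \<R> \<Longrightarrow> closedin (prod_topology X X) R"
    and partial: "\<And>R. R \<in> \<R> \<Longrightarrow> single_valued R \<or> single_valued (converse R)"
    and "topspace X \<times> topspace X \<subseteq> \<Union>\<R>"
  obtains p where "openin X {p}"
proof -
  obtain R U V where R: "R \<in> \<R>" "openin X U" "openin X V" "U \<noteq> {}" "V \<noteq> {}" "U \<times> V \<subseteq> R"
    using Baire_rectangle_in_closed_cover[of X X \<R>] assms by metis
  obtain u v where uv: "u \<in> U" "v \<in> V"
    using R(4,5) by blast
  consider "single_valued R" | "single_valued (converse R)"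
    using partial R(1) by blast
  then show thesis
  proof cases
    case 1
    then have "V = {v}"
      using R(6) uv by (auto dest: single_valuedD)
    with R(3) that show thesis by blast
  next
    case 2
    then have "U = {u}"
      using R(6) uv by (auto dest: single_valuedD)
    with R(2) that show thesis by blast
  qed
qed

lemma closedin_isolated_point_of_closed_partial_function_cover:
  assumes "compact_space X" "Hausdorff_space X" "closedin X F" "F \<noteq> {}" "countable \<R>"
    and closed: "\<And>R. R \<in> \<R> \<Longrightarrow> closedin (prod_topology X X) R"
    and partial: "\<And>R. R \<in> \<R> \<Longrightarrow> single_valued R \<or> single_valued (converse R)"
    and cover: "F \<times> F \<subseteq> \<Union>\<R>"
  obtains p W where "openin X W" "W \<inter> F = {p}"
proof -
  let ?XF = "subtopology X F"
  have topF: "topspace ?XF = F"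
    using assms(3) closedin_subset by (metis topspace_subtopology_subset)
  obtain p where "openin ?XF {p}"
  proof (rule isolated_point_of_closed_partial_function_cover[of ?XF "(\<lambda>R. R \<inter> (F \<times> F)) ` \<R>"])
    show "compact_space ?XF"
      using assms(1,3) closedin_compact_space compact_space_subtopology by blast
    show "Hausdorff_space ?XF"
      using assms(2) Hausdorff_space_subtopology by blast
    show "closedin (prod_topology ?XF ?XF) R" if R: "R \<in> (\<lambda>R. R \<inter> (F \<times> F)) ` \<R>" for R
    proof -
      obtain R0 where "R0 \<in> \<R>" "R = R0 \<inter> (F \<times> F)"
        using R by blast
      then show ?thesis
        using closedin_subtopology_Int_closed[OF closed, of R0 "F \<times> F"]
        by (simp add: subtopology_Times Int_commute)
    qed
    show "single_valued R \<or> single_valued (converse R)" if "R \<in> (\<lambda>R. R \<inter> (F \<times> F)) ` \<R>" for R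
      using that partial by (blast intro: single_valued_subset converse_mono[THEN iffD2])
  qed (use topF assms(4,5) cover in auto)
  then show thesis
    using that by (auto simp: openin_subtopology)
qed

lemma topspace_subset_image_at_forced_point:
  fixes D :: "'i::countable \<Rightarrow> 'a set"
  assumes Hausdorff: "Hausdorff_space X"
    and D: "\<And>n. closedin X (D n)" and f: "\<And>n. continuous_map (subtopology X (D n)) X (f n)"
    and cover: "topspace X \<times> topspace X \<subseteq> (\<Union>n. graph_on (D n) (f n) \<union> converse (graph_on (D n) (f n)))"
    and C: "closedin X C" "uncountable C"
    and forced: "\<And>S. closedin X S \<Longrightarrow> S \<subseteq> C \<Longrightarrow> uncountable S \<Longrightarrow> p \<in> S"
  shows "topspace X \<subseteq> (\<lambda>n. f n p) ` {n. p \<in> D n}"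
proof
  fix x assume x: "x \<in> topspace X"
  define A where "A n = {y \<in> D n. f n y = x}" for n
  have "closedin X (A n)" for n
  proof -
    have "closedin (subtopology X (D n)) {y \<in> topspace (subtopology X (D n)). f n y \<in> {x}}"
      using closedin_continuous_map_preimage[OF f closedin_Hausdorff_singleton[OF Hausdorff x]] .
    moreover have "{y \<in> topspace (subtopology X (D n)). f n y \<in> {x}} = A n"
      using closedin_subset[OF D] unfolding A_def by auto
    ultimately show ?thesis
      using closedin_trans_full D by metis
  qed
  have "C \<subseteq> (\<lambda>n. f n x) ` {n. x \<in> D n} \<union> (\<Union>n. A n \<inter> C)"
  proof
    fix y assume "y \<in> C"
    then have "(x, y) \<in> topspace X \<times> topspace X"
      using x closedin_subset[OF C(1)] by auto
    with \<open>y \<in> C\<close> cover show "y \<in> (\<lambda>n. f n x) ` {n. x \<in> D n} \<union> (\<Union>n. A n \<inter> C)"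
      by (fastforce simp: graph_on_def A_def)
  qed
  moreover have "countable ((\<lambda>n. f n x) ` {n. x \<in> D n})"
    by (intro countable_image countable_subset[OF subset_UNIV countableI_type])
  ultimately obtain n where "uncountable (A n \<inter> C)"
    using C(2) countable_subset by (metis countable_UN countable_Un UNIV_I countableI_type)
  with \<open>closedin X (A n)\<close> C(1) have "p \<in> A n"
    using forced by blast
  then show "x \<in> (\<lambda>n. f n p) ` {n. p \<in> D n}"
    by (auto simp: A_def)
qed

lemma isolated_condensation_point_in_uncountable_closed_subsets:
  assumes "compact_space X" "Hausdorff_space X" "openin X W"
    and isolated: "W \<inter> {q. condensation_point_of X (topspace X) q} = {p}"
  obtains C where "closedin X C" "uncountable C"
    "\<And>S. closedin X S \<Longrightarrow> S \<subseteq> C \<Longrightarrow> uncountable S \<Longrightarrow> p \<in> S"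
proof -
  have "regular_space X"
    using assms(1,2) by (rule compact_Hausdorff_imp_regular_space)
  then have "neighbourhood_base_of (closedin X) X"
    by (simp add: neighbourhood_base_of_closedin)
  moreover have "p \<in> W" and p: "condensation_point_of X (topspace X) p"
    using isolated by auto
  ultimately obtain N C where NC: "openin X N" "closedin X C" "p \<in> N" "N \<subseteq> C" "C \<subseteq> W"
    using neighbourhood_base_of[THEN iffD1, rule_format, OF _ conjI[OF assms(3) \<open>p \<in> W\<close>]] by blast
  have "uncountable (N \<inter> topspace X)"
    using p NC(1,3) by (simp add: condensation_point_of_def)
  then have "uncountable C"
    using NC(4) countable_subset[of "N \<inter> topspace X" C] by blast
  moreover have "p \<in> S" if S: "closedin X S" "S \<subseteq> C" "uncountable S" for S
  proof -
    obtain q where q: "condensation_point_of X S q"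
      using compact_space_condensation_point_exists[OF assms(1) closedin_subset[OF S(1)] S(3)] .
    then have "q \<in> S"
      by (rule condensation_point_of_closedin_mem[OF S(1)])
    moreover have "condensation_point_of X (topspace X) q"
      using condensation_point_of_mono[OF q closedin_subset[OF S(1)]] .
    moreover have "q \<in> W"
      using \<open>q \<in> S\<close> S(2) NC(5) by blast
    ultimately show ?thesis
      using isolated by (metis IntI mem_Collect_eq singletonD)
  qed
  ultimately show thesis
    using that NC(2) by blast
qed

theorem theorem4p1:
  fixes X :: "'a topology"
    and D :: "nat \<Rightarrow> 'a set"
    and f :: "nat \<Rightarrow> 'a \<Rightarrow> 'a"
  assumes "compact_space X"
    and "Hausdorff_space X"
    and "\<And>n. closedin X (D n)"
    and "\<And>n. continuous_map (subtopology X (D n)) X (f n)"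
    and "topspace X \<times> topspace X = (\<Union>n. graph_on (D n) (f n) \<union> converse (graph_on (D n) (f n)))"
  shows "countable (topspace X)"
proof (rule ccontr)
  assume uncountable: "uncountable (topspace X)"
  define L where "L = {p. condensation_point_of X (topspace X) p}"
  define \<R> where "\<R> = range (\<lambda>n. graph_on (D n) (f n)) \<union> range (\<lambda>n. converse (graph_on (D n) (f n)))"
  have \<R>_countable: "countable \<R>"
    by (simp add: \<R>_def)
  have \<R>_closed: "closedin (prod_topology X X) R" if "R \<in> \<R>" for R
    using that assms(2-4) by (auto simp: \<R>_def closedin_graph_on closedin_converse_graph_on)
  have \<R>_partial: "single_valued R \<or> single_valued (converse R)" if "R \<in> \<R>" for R
    using that by (auto simp: \<R>_def single_valued_graph_on)
  have L_closed: "closedin X L"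
    unfolding L_def by (rule closedin_condensation_points)
  have L_nonempty: "L \<noteq> {}"
    using compact_space_condensation_point_exists[OF assms(1) order_refl uncountable] L_def by blast
  have L_cover: "L \<times> L \<subseteq> \<Union>\<R>"
    using closedin_subset[OF L_closed] assms(5) by (auto simp: \<R>_def)
  obtain p W where "openin X W" "W \<inter> L = {p}"
    using closedin_isolated_point_of_closed_partial_function_cover
      [OF assms(1,2) L_closed L_nonempty \<R>_countable \<R>_closed \<R>_partial L_cover] .
  then obtain C where "closedin X C" "uncountable C"
    "\<And>S. closedin X S \<Longrightarrow> S \<subseteq> C \<Longrightarrow> uncountable S \<Longrightarrow> p \<in> S"
    using isolated_condensation_point_in_uncountable_closed_subsets[OF assms(1,2)] L_def by metis
  then have "topspace X \<subseteq> (\<lambda>n. f n p) ` {n. p \<in> D n}"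
    by (rule topspace_subset_image_at_forced_point[OF assms(2-4) equalityD1[OF assms(5)]])
  moreover have "countable ((\<lambda>n. f n p) ` {n. p \<in> D n})"
    by (intro countable_image countable_subset[OF subset_UNIV countableI_type])
  ultimately show False
    using uncountable countable_subset by blast
qed

end
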